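(* For each $n$, let $\{\eta_{n,v}: v\in V_n\}$ be a centered Gaussian field indexed by a finite nonempty set $V_n$, and suppose there is a fixed $\lambda>1$ with $\operatorname{Var}(\eta_{n,v})\le n$ for all $v\in V_n$, $\frac1n\log|V_n|\to\log\lambda$, and $$\lim_{n\to\infty}\frac{\mathbb{E}[\sup_{v\in V_n}\eta_{n,v}]}{n\sqrt{2\log\lambda}}=1.$$ Then for every $\epsilon>0$ there exist $c>0$ and deterministic subsets $W_n\subseteq V_n$ such that, for all sufficiently large $n$, $|W_n|\ge e^{cn}$ and $$\mathbb{E}(\eta_{n,u}\eta_{n,v})\le \epsilon\sqrt{\operatorname{Var}(\eta_{n,u})\operatorname{Var}(\eta_{n,v})}\quad\text{for all distinct } u,v\in W_n.$$ *)

theory Defs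
  imports "HOL-Probability.Probability"
begin

definition centered_normal_rv :: "'b measure \<Rightarrow> ('b \<Rightarrow> real) \<Rightarrow> bool" where
  "centered_normal_rv M X \<longleftrightarrow>
     X \<in> borel_measurable M \<and>
     ((AE \<omega> in M. X \<omega> = 0) \<or> (\<exists>\<sigma>>0. distributed M lborel X (normal_density 0 \<sigma>)))"

definition centered_gaussian_field :: "'b measure \<Rightarrow> 'a set \<Rightarrow> ('a \<Rightarrow> 'b \<Rightarrow> real) \<Rightarrow> bool" where
  "centered_gaussian_field M V \<eta> \<longleftrightarrow>
     prob_space M \<and> finite V \<and>
     (\<forall>v\<in>V. \<eta> v \<in> borel_measurable M) \<and>
     (\<forall>a :: 'a \<Rightarrow> real. centered_normal_rv M (\<lambda>\<omega>. \<Sum>v\<in>V. a v * \<eta> v \<omega>))"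

end

theory Submission
  imports Defs
begin

text \<open>Fix \<open>e < 1\<close> and let \<open>W\<close> be a maximal subset of \<open>V\<^sub>n\<close> whose points are pairwise
  \<open>e\<close>-decorrelated. Every other \<open>v\<close> is \<open>e\<close>-correlated with some \<open>w \<in> W\<close>, and regressing
  \<open>\<eta>\<^sub>v\<close> on \<open>\<eta>\<^sub>w\<close> leaves a Gaussian residual of variance at most \<open>(1 - e\<^sup>2) n\<close>.
  Hence \<open>max \<eta>\<close> is bounded by the maximum of at most \<open>|W| + 1\<close> rescaled field values plus the
  maximum of \<open>|V\<^sub>n|\<close> residuals, and the sub-Gaussian bound for maxima gives
  \<open>E max \<eta> \<le> sqrt (2 n log (|W| + 1)) + sqrt (1 - e\<^sup>2) sqrt (2 n log |V\<^sub>n|)\<close>.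
  Since \<open>E max \<eta> \<sim> n sqrt (2 log \<lambda>)\<close> and \<open>log |V\<^sub>n| \<sim> n log \<lambda>\<close>, the first term must be
  of order \<open>n\<close>, i.e. \<open>|W|\<close> grows exponentially.\<close>

lemma le_two_sqrt_mult_of_le_div_add_mult:
  fixes a b x :: real
  assumes "0 \<le> a" "0 \<le> b" and le: "\<And>t. t > 0 \<Longrightarrow> x \<le> a / t + b * t"
  shows "x \<le> 2 * sqrt (a * b)"
proof (cases "a > 0 \<and> b > 0")
  case True
  define t where "t = sqrt (a / b)"
  have "t > 0" "a / t = sqrt (a * b)" "b * t = sqrt (a * b)"
    using True by (auto simp: t_def real_sqrt_divide real_sqrt_mult field_simps)
  then show ?thesis
    using le[of t] by simp
next
  case False
  then have "a = 0 \<or> b = 0"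
    using assms by auto
  moreover have "x \<le> 0"
  proof (rule ccontr)
    assume "\<not> x \<le> 0"
    then have x: "x > 0" by simp
    show False
      using \<open>a = 0 \<or> b = 0\<close>
    proof
      assume "a = 0"
      have "b * x < 2 * (b + 1) * x"
        using x mult_nonneg_nonneg[OF assms(2), of x] by (simp add: algebra_simps)
      then have "b * (x / (2 * (b + 1))) < x"
        using assms(2) by (simp add: field_simps)
      then show False
        using le[of "x / (2 * (b + 1))"] x assms \<open>a = 0\<close> by simp
    next
      assume "b = 0"
      have "a * x < 2 * (a + 1) * x"
        using x mult_nonneg_nonneg[OF assms(1), of x] by (simp add: algebra_simps)
      then have "a / (2 * (a + 1) / x) < x"
        using assms(1) by (simp add: field_simps)
      then show False
        using le[of "2 * (a + 1) / x"] x assms \<open>b = 0\<close> by simp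
    qed
  qed
  ultimately show ?thesis
    by auto
qed

lemma square_le_mult_of_quadratic_form_nonneg:
  fixes a b c :: real
  assumes nonneg: "\<And>\<alpha> \<beta>. 0 \<le> \<alpha>\<^sup>2 * a + 2 * \<alpha> * \<beta> * c + \<beta>\<^sup>2 * b"
  shows "c\<^sup>2 \<le> a * b"
proof (cases "b > 0")
  case True
  have "0 \<le> b\<^sup>2 * a + 2 * b * (- c) * c + (- c)\<^sup>2 * b"
    by (rule nonneg)
  also have "\<dots> = b * (a * b - c\<^sup>2)"
    by (simp add: power2_eq_square algebra_simps)
  finally show ?thesis
    using True by (simp add: zero_le_mult_iff)
next
  case False
  have "0 \<le> b" "0 \<le> a"
    using nonneg[of 0 1] nonneg[of 1 0] by simp_all
  with False have "b = 0" by simp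
  have "c = 0"
  proof (rule ccontr)
    assume "c \<noteq> 0"
    have "0 \<le> 1\<^sup>2 * a + 2 * 1 * (- (a + 1) / (2 * c)) * c + (- (a + 1) / (2 * c))\<^sup>2 * b"
      by (rule nonneg)
    then show False
      using \<open>c \<noteq> 0\<close> \<open>b = 0\<close> by (simp add: field_simps)
  qed
  then show ?thesis
    using \<open>b = 0\<close> by simp
qed

lemma regression_residual_le:
  fixes a b c e :: real
  assumes cs: "c\<^sup>2 \<le> a * b" and "0 \<le> a" "0 \<le> e" and corr: "e * sqrt (a * b) < c"
  shows "0 < c / b" "c / b \<le> sqrt (a / b)"
    and "a - 2 * (c / b) * c + (c / b)\<^sup>2 * b \<le> (1 - e\<^sup>2) * a"
proof -
  have "0 \<le> a * b"
    using cs zero_le_power2[of c] by linarith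
  then have "0 < c"
    using corr \<open>0 \<le> e\<close> by (smt (verit) mult_nonneg_nonneg real_sqrt_ge_zero)
  then have "0 < a * b"
    using cs zero_less_power[OF \<open>0 < c\<close>, of 2] by linarith
  then have "0 < b"
    using \<open>0 \<le> a\<close> by (simp add: zero_less_mult_iff)
  show "0 < c / b"
    using \<open>0 < c\<close> \<open>0 < b\<close> by simp
  have "(c / b)\<^sup>2 \<le> a / b"
    using cs \<open>0 < b\<close> by (simp add: power_divide field_simps power2_eq_square)
  then show "c / b \<le> sqrt (a / b)"
    using real_le_rsqrt by blast
  have "(e * sqrt (a * b))\<^sup>2 < c\<^sup>2"
    using corr \<open>0 \<le> e\<close> \<open>0 \<le> a * b\<close> by (intro power_strict_mono) auto
  then have "e\<^sup>2 * a * b < c\<^sup>2"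
    using \<open>0 \<le> a * b\<close> by (simp add: power_mult_distrib)
  then show "a - 2 * (c / b) * c + (c / b)\<^sup>2 * b \<le> (1 - e\<^sup>2) * a"
    using \<open>0 < b\<close> by (simp add: field_simps power2_eq_square)
qed

lemma mult_le_max_zero:
  fixes a c y :: "'a :: linordered_ring"
  assumes "0 \<le> a" "a \<le> c"
  shows "a * y \<le> max 0 (c * y)"
proof (cases "0 \<le> y")
  case True
  then show ?thesis
    using assms(2) by (simp add: mult_right_mono le_max_iff_disj)
next
  case False
  then show ?thesis
    using assms(1) by (simp add: mult_nonneg_nonpos le_max_iff_disj)
qed

section \<open>Sub-Gaussian variables and their maxima\<close>

definition subgaussian :: "'a measure \<Rightarrow> ('a \<Rightarrow> real) \<Rightarrow> real \<Rightarrow> bool" where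
  "subgaussian M X \<sigma>2 \<longleftrightarrow> integrable M X \<and>
     (\<forall>t. integrable M (\<lambda>x. exp (t * X x)) \<and> (\<integral>x. exp (t * X x) \<partial>M) \<le> exp (t\<^sup>2 * \<sigma>2 / 2))"

lemma normal_density_mult_exp:
  fixes \<sigma> t x :: real
  assumes "\<sigma> > 0"
  shows "normal_density 0 \<sigma> x * exp (t * x) = exp (t\<^sup>2 * \<sigma>\<^sup>2 / 2) * normal_density (t * \<sigma>\<^sup>2) \<sigma> x"
proof -
  have exponent: "-(x - 0)\<^sup>2 / (2 * \<sigma>\<^sup>2) + t * x = t\<^sup>2 * \<sigma>\<^sup>2 / 2 + -(x - t * \<sigma>\<^sup>2)\<^sup>2 / (2 * \<sigma>\<^sup>2)"
    using assms by (simp add: field_simps power2_eq_square)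
  have "exp (-(x - 0)\<^sup>2 / (2 * \<sigma>\<^sup>2)) * exp (t * x)
      = exp (t\<^sup>2 * \<sigma>\<^sup>2 / 2) * exp (-(x - t * \<sigma>\<^sup>2)\<^sup>2 / (2 * \<sigma>\<^sup>2))"
    unfolding mult_exp_exp exponent ..
  then show ?thesis
    unfolding normal_density_def by (metis (no_types, lifting) mult.assoc mult.left_commute)
qed

lemma (in prob_space) centered_normal_rv_moments:
  assumes "centered_normal_rv M X"
  shows "integrable M X" "integrable M (\<lambda>x. (X x)\<^sup>2)" "expectation X = 0"
    and "integrable M (\<lambda>x. exp (t * X x))"
    and "expectation (\<lambda>x. exp (t * X x)) = exp (t\<^sup>2 * expectation (\<lambda>x. (X x)\<^sup>2) / 2)"
proof -
  have [measurable]: "X \<in> borel_measurable M"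
    using assms unfolding centered_normal_rv_def by simp
  consider "AE x in M. X x = 0" | \<sigma> where "\<sigma> > 0" "distributed M lborel X (normal_density 0 \<sigma>)"
    using assms unfolding centered_normal_rv_def by blast
  then have "integrable M X \<and> integrable M (\<lambda>x. (X x)\<^sup>2) \<and> expectation X = 0 \<and>
      integrable M (\<lambda>x. exp (t * X x)) \<and>
      expectation (\<lambda>x. exp (t * X x)) = exp (t\<^sup>2 * expectation (\<lambda>x. (X x)\<^sup>2) / 2)"
  proof cases
    case 1
    have "AE x in M. X x = 0" "AE x in M. (X x)\<^sup>2 = 0" "AE x in M. exp (t * X x) = 1"
      using 1 by auto
    then show ?thesis
      using integrable_cong_AE[of X M "\<lambda>_. 0"] integral_cong_AE[of X M "\<lambda>_. 0"]
        integrable_cong_AE[of "\<lambda>x. (X x)\<^sup>2" M "\<lambda>_. 0"]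
        integral_cong_AE[of "\<lambda>x. (X x)\<^sup>2" M "\<lambda>_. 0"]
        integrable_cong_AE[of "\<lambda>x. exp (t * X x)" M "\<lambda>_. 1"]
        integral_cong_AE[of "\<lambda>x. exp (t * X x)" M "\<lambda>_. 1"]
      by (simp add: prob_space)
  next
    case (2 \<sigma>)
    have "integrable M X"
      using distributed_integrable[OF 2(2), of "\<lambda>x. x"] integrable_normal_moment_nz_1[of \<sigma> 0] 2
      by simp
    moreover have "integrable M (\<lambda>x. (X x)\<^sup>2)"
      using distributed_integrable[OF 2(2), of "\<lambda>x. x\<^sup>2"] integrable_normal_moment[OF 2(1), of 0 2]
      by simp
    moreover have "expectation (\<lambda>x. (X x)\<^sup>2) = \<sigma>\<^sup>2"
      using normal_distributed_variance[OF 2] normal_distributed_expectation[OF 2] by simp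
    moreover have "integrable M (\<lambda>x. exp (t * X x))"
      using distributed_integrable[OF 2(2), of "\<lambda>x. exp (t * x)"] 2(1)
      by (simp add: normal_density_mult_exp)
    moreover have "expectation (\<lambda>x. exp (t * X x)) = exp (t\<^sup>2 * \<sigma>\<^sup>2 / 2)"
      using distributed_integral[OF 2(2), of "\<lambda>x. exp (t * x)", symmetric] 2(1)
      by (simp add: normal_density_mult_exp)
    ultimately show ?thesis
      using normal_distributed_expectation[OF 2] by simp
  qed
  then show "integrable M X" "integrable M (\<lambda>x. (X x)\<^sup>2)" "expectation X = 0"
    and "integrable M (\<lambda>x. exp (t * X x))"
    and "expectation (\<lambda>x. exp (t * X x)) = exp (t\<^sup>2 * expectation (\<lambda>x. (X x)\<^sup>2) / 2)"
    by auto
qed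

lemma (in prob_space) subgaussian_centered_normal_rv:
  assumes "centered_normal_rv M X" "expectation (\<lambda>x. (X x)\<^sup>2) \<le> \<sigma>2"
  shows "subgaussian M X \<sigma>2"
proof -
  have "exp (t\<^sup>2 * expectation (\<lambda>x. (X x)\<^sup>2) / 2) \<le> exp (t\<^sup>2 * \<sigma>2 / 2)" for t
    using assms(2) by (simp add: mult_left_mono)
  then show ?thesis
    using centered_normal_rv_moments[OF assms(1)] unfolding subgaussian_def by simp
qed

lemma subgaussian_integrable: "subgaussian M X \<sigma>2 \<Longrightarrow> integrable M X"
  by (simp add: subgaussian_def)

lemma (in prob_space) subgaussian_zero: "0 \<le> \<sigma>2 \<Longrightarrow> subgaussian M (\<lambda>_. 0) \<sigma>2"
  by (simp add: subgaussian_def prob_space)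

lemma (in prob_space) exp_expectation_Max_le_subgaussian:
  fixes X :: "'i \<Rightarrow> 'a \<Rightarrow> real"
  assumes I: "finite I" "I \<noteq> {}" and sg: "\<And>i. i \<in> I \<Longrightarrow> subgaussian M (X i) \<sigma>2"
  shows "exp (t * expectation (\<lambda>x. MAX i\<in>I. X i x)) \<le> card I * exp (t\<^sup>2 * \<sigma>2 / 2)"
proof -
  let ?Y = "\<lambda>x. MAX i\<in>I. X i x"
  have int: "integrable M (X i)" "integrable M (\<lambda>x. exp (t * X i x))"
    and mgf: "expectation (\<lambda>x. exp (t * X i x)) \<le> exp (t\<^sup>2 * \<sigma>2 / 2)" if "i \<in> I" for i
    using sg[OF that] unfolding subgaussian_def by auto
  have int_Y: "integrable M ?Y"
    using I int by (intro integrable_MAX) auto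
  have exp_Y_le: "exp (t * ?Y x) \<le> (\<Sum>i\<in>I. exp (t * X i x))" for x
  proof -
    have "?Y x \<in> (\<lambda>i. X i x) ` I"
      using I by (intro Max_in) auto
    then obtain i where "i \<in> I" "?Y x = X i x"
      by auto
    then show ?thesis
      using I by (auto intro!: member_le_sum)
  qed
  have int_exp_Y: "integrable M (\<lambda>x. exp (t * ?Y x))"
  proof (rule Bochner_Integration.integrable_bound)
    show "integrable M (\<lambda>x. \<Sum>i\<in>I. exp (t * X i x))"
      using int by (intro Bochner_Integration.integrable_sum) auto
    show "(\<lambda>x. exp (t * ?Y x)) \<in> borel_measurable M"
      using borel_measurable_integrable[OF int_Y] by measurable
    show "AE x in M. norm (exp (t * ?Y x)) \<le> norm (\<Sum>i\<in>I. exp (t * X i x))"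
      using exp_Y_le by (intro AE_I2) (simp add: sum_nonneg)
  qed
  have "exp (t * expectation ?Y) = exp (expectation (\<lambda>x. t * ?Y x))"
    by simp
  also have "\<dots> \<le> expectation (\<lambda>x. exp (t * ?Y x))"
    by (rule jensens_inequality[where I = UNIV]) (use int_Y int_exp_Y exp_convex in simp_all)
  also have "\<dots> \<le> expectation (\<lambda>x. \<Sum>i\<in>I. exp (t * X i x))"
    using int_exp_Y int exp_Y_le by (intro integral_mono) auto
  also have "\<dots> = (\<Sum>i\<in>I. expectation (\<lambda>x. exp (t * X i x)))"
    using int by (intro Bochner_Integration.integral_sum) auto
  also have "\<dots> \<le> card I * exp (t\<^sup>2 * \<sigma>2 / 2)"
    using sum_mono[of I _ "\<lambda>_. exp (t\<^sup>2 * \<sigma>2 / 2)"] mgf by simp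
  finally show ?thesis .
qed

lemma (in prob_space) expectation_Max_le_subgaussian:
  fixes X :: "'i \<Rightarrow> 'a \<Rightarrow> real"
  assumes I: "finite I" "I \<noteq> {}" and "0 \<le> \<sigma>2"
    and sg: "\<And>i. i \<in> I \<Longrightarrow> subgaussian M (X i) \<sigma>2"
  shows "expectation (\<lambda>x. MAX i\<in>I. X i x) \<le> sqrt (2 * \<sigma>2 * ln (card I))"
proof -
  have card_pos: "card I > 0"
    using I by (simp add: card_gt_0_iff)
  have "expectation (\<lambda>x. MAX i\<in>I. X i x) \<le> ln (card I) / t + (\<sigma>2 / 2) * t" if "t > 0" for t
  proof -
    have "t * expectation (\<lambda>x. MAX i\<in>I. X i x) \<le> ln (card I * exp (t\<^sup>2 * \<sigma>2 / 2))"
      using exp_expectation_Max_le_subgaussian[OF I sg, where t = t] card_pos by (subst ln_ge_iff) auto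
    then have "t * expectation (\<lambda>x. MAX i\<in>I. X i x) \<le> ln (card I) + t\<^sup>2 * \<sigma>2 / 2"
      using card_pos by (simp add: ln_mult)
    then show ?thesis
      using that by (simp add: field_simps power2_eq_square)
  qed
  then have "expectation (\<lambda>x. MAX i\<in>I. X i x) \<le> 2 * sqrt (ln (card I) * (\<sigma>2 / 2))"
    using card_pos \<open>0 \<le> \<sigma>2\<close> by (intro le_two_sqrt_mult_of_le_div_add_mult) auto
  also have "\<dots> = sqrt (2\<^sup>2 * (ln (card I) * (\<sigma>2 / 2)))"
    unfolding real_sqrt_mult by simp
  also have "\<dots> = sqrt (2 * \<sigma>2 * ln (card I))"
    by (simp add: ac_simps)
  finally show ?thesis .
qed

lemma (in prob_space) expectation_Max_le_Max_add_Max: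
  fixes Y \<xi> :: "'i \<Rightarrow> 'a \<Rightarrow> real" and X :: "'j \<Rightarrow> 'a \<Rightarrow> real"
  assumes V: "finite V" "V \<noteq> {}" and I: "finite I" "I \<noteq> {}"
    and "\<And>v. v \<in> V \<Longrightarrow> integrable M (Y v)" "\<And>i. i \<in> I \<Longrightarrow> integrable M (X i)"
      "\<And>v. v \<in> V \<Longrightarrow> integrable M (\<xi> v)"
    and le: "\<And>v x. v \<in> V \<Longrightarrow> Y v x \<le> (MAX i\<in>I. X i x) + \<xi> v x"
  shows "expectation (\<lambda>x. MAX v\<in>V. Y v x)
    \<le> expectation (\<lambda>x. MAX i\<in>I. X i x) + expectation (\<lambda>x. MAX v\<in>V. \<xi> v x)"
proof -
  have int: "integrable M (\<lambda>x. MAX v\<in>V. Y v x)" "integrable M (\<lambda>x. MAX i\<in>I. X i x)"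
    "integrable M (\<lambda>x. MAX v\<in>V. \<xi> v x)"
    using assms by (simp_all add: integrable_MAX)
  have "Y v x \<le> (MAX i\<in>I. X i x) + (MAX v\<in>V. \<xi> v x)" if "v \<in> V" for v x
  proof -
    have "\<xi> v x \<le> (MAX v\<in>V. \<xi> v x)"
      using V that by (intro Max_ge) simp_all
    then show ?thesis
      using le[OF that, of x] by linarith
  qed
  then have "expectation (\<lambda>x. MAX v\<in>V. Y v x) \<le> expectation (\<lambda>x. (MAX i\<in>I. X i x) + (MAX v\<in>V. \<xi> v x))"
    using V by (intro integral_mono int Bochner_Integration.integrable_add) (simp_all add: Max_le_iff)
  also have "\<dots> = expectation (\<lambda>x. MAX i\<in>I. X i x) + expectation (\<lambda>x. MAX v\<in>V. \<xi> v x)"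
    using int(2,3) by (rule Bochner_Integration.integral_add)
  finally show ?thesis .
qed

section \<open>Centered Gaussian fields\<close>

lemma (in prob_space) centered_gaussian_field_lincomb:
  assumes F: "centered_gaussian_field M V \<eta>" and "u \<in> V" "v \<in> V"
  shows "centered_normal_rv M (\<lambda>x. \<alpha> * \<eta> u x + \<beta> * \<eta> v x)"
proof -
  define a where "a = (\<lambda>y. (if y = u then \<alpha> else 0) + (if y = v then \<beta> else 0))"
  have "finite V"
    using F unfolding centered_gaussian_field_def by simp
  have "a y * \<eta> y x = (if y = u then \<alpha> * \<eta> y x else 0) + (if y = v then \<beta> * \<eta> y x else 0)" for x y
    by (simp add: a_def distrib_right)
  then have "(\<Sum>y\<in>V. a y * \<eta> y x) = \<alpha> * \<eta> u x + \<beta> * \<eta> v x" for x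
    using \<open>finite V\<close> assms(2,3) by (simp add: sum.distrib sum.delta)
  moreover have "centered_normal_rv M (\<lambda>x. \<Sum>y\<in>V. a y * \<eta> y x)"
    using F unfolding centered_gaussian_field_def by simp
  ultimately show ?thesis
    by simp
qed

lemma (in prob_space) centered_gaussian_field_integrable_mult:
  assumes F: "centered_gaussian_field M V \<eta>" and "u \<in> V" "v \<in> V"
  shows "integrable M (\<lambda>x. \<eta> u x * \<eta> v x)"
proof -
  note lincomb = centered_normal_rv_moments[OF centered_gaussian_field_lincomb[OF F]]
  have "integrable M (\<lambda>x. (\<eta> u x + \<eta> v x)\<^sup>2)" "integrable M (\<lambda>x. (\<eta> u x)\<^sup>2)"
    "integrable M (\<lambda>x. (\<eta> v x)\<^sup>2)"
    using lincomb(2)[OF assms(2,3), of 1 1] lincomb(2)[OF assms(2,2), of 1 0]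
      lincomb(2)[OF assms(3,3), of 1 0] by simp_all
  then have "integrable M (\<lambda>x. ((\<eta> u x + \<eta> v x)\<^sup>2 - (\<eta> u x)\<^sup>2 - (\<eta> v x)\<^sup>2) / 2)"
    by auto
  then show ?thesis
    by (simp add: power2_eq_square algebra_simps)
qed

lemma (in prob_space) centered_gaussian_field_variance:
  assumes F: "centered_gaussian_field M V \<eta>" and "u \<in> V"
  shows "variance (\<eta> u) = expectation (\<lambda>x. (\<eta> u x)\<^sup>2)"
  using centered_normal_rv_moments(3)[OF centered_gaussian_field_lincomb[OF F assms(2,2), of 1 0]] by simp

lemma (in prob_space) centered_gaussian_field_second_moment:
  assumes F: "centered_gaussian_field M V \<eta>" and "u \<in> V" "v \<in> V"
  shows "expectation (\<lambda>x. (\<alpha> * \<eta> u x + \<beta> * \<eta> v x)\<^sup>2) =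
    \<alpha>\<^sup>2 * variance (\<eta> u) + 2 * \<alpha> * \<beta> * expectation (\<lambda>x. \<eta> u x * \<eta> v x) + \<beta>\<^sup>2 * variance (\<eta> v)"
proof -
  have square: "integrable M (\<lambda>x. (\<eta> y x)\<^sup>2)" if "y \<in> V" for y
    using centered_gaussian_field_integrable_mult[OF F that that] by (simp add: power2_eq_square)
  have "(\<lambda>x. (\<alpha> * \<eta> u x + \<beta> * \<eta> v x)\<^sup>2) = (\<lambda>x. \<alpha>\<^sup>2 * (\<eta> u x)\<^sup>2
      + 2 * \<alpha> * \<beta> * (\<eta> u x * \<eta> v x) + \<beta>\<^sup>2 * (\<eta> v x)\<^sup>2)"
    by (simp add: power2_eq_square algebra_simps)
  then show ?thesis
    using square[OF assms(2)] square[OF assms(3)] centered_gaussian_field_integrable_mult[OF F assms(2,3)]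
      centered_gaussian_field_variance[OF F assms(2)] centered_gaussian_field_variance[OF F assms(3)]
    by simp
qed

lemma (in prob_space) centered_gaussian_field_covariance_square_le:
  assumes F: "centered_gaussian_field M V \<eta>" and "u \<in> V" "v \<in> V"
  shows "(expectation (\<lambda>x. \<eta> u x * \<eta> v x))\<^sup>2 \<le> variance (\<eta> u) * variance (\<eta> v)"
  by (rule square_le_mult_of_quadratic_form_nonneg)
     (simp flip: centered_gaussian_field_second_moment[OF assms])

lemma (in prob_space) centered_gaussian_field_regression:
  assumes F: "centered_gaussian_field M V \<eta>" and "v \<in> V" "w \<in> V" and "0 \<le> e"
    and corr: "e * sqrt (variance (\<eta> v) * variance (\<eta> w)) < expectation (\<lambda>x. \<eta> v x * \<eta> w x)"
  defines "a \<equiv> expectation (\<lambda>x. \<eta> v x * \<eta> w x) / variance (\<eta> w)"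
  shows "0 < a" "a \<le> sqrt (variance (\<eta> v) / variance (\<eta> w))"
    and "expectation (\<lambda>x. (\<eta> v x - a * \<eta> w x)\<^sup>2) \<le> (1 - e\<^sup>2) * variance (\<eta> v)"
proof -
  note residual = regression_residual_le[OF centered_gaussian_field_covariance_square_le[OF F assms(2,3)]
      variance_positive \<open>0 \<le> e\<close> corr]
  show "0 < a" "a \<le> sqrt (variance (\<eta> v) / variance (\<eta> w))"
    using residual unfolding a_def by simp_all
  have "expectation (\<lambda>x. (\<eta> v x - a * \<eta> w x)\<^sup>2) = expectation (\<lambda>x. (1 * \<eta> v x + (- a) * \<eta> w x)\<^sup>2)"
    by simp
  also have "\<dots> = variance (\<eta> v) - 2 * a * expectation (\<lambda>x. \<eta> v x * \<eta> w x) + a\<^sup>2 * variance (\<eta> w)"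
    unfolding centered_gaussian_field_second_moment[OF F assms(2,3)] by (simp add: power2_eq_square)
  finally show "expectation (\<lambda>x. (\<eta> v x - a * \<eta> w x)\<^sup>2) \<le> (1 - e\<^sup>2) * variance (\<eta> v)"
    using residual unfolding a_def by simp
qed

text \<open>No positivity of the variance is needed: for \<open>variance (\<eta> u) = 0\<close> the factor is
  \<open>sqrt (N / 0) = 0\<close>.\<close>

lemma (in prob_space) subgaussian_rescaled_centered_gaussian_field:
  assumes F: "centered_gaussian_field M V \<eta>" and "u \<in> V" "0 \<le> N"
  shows "subgaussian M (\<lambda>x. sqrt (N / variance (\<eta> u)) * \<eta> u x) N"
proof -
  have "(sqrt (N / variance (\<eta> u)))\<^sup>2 * variance (\<eta> u) \<le> N"
    using \<open>0 \<le> N\<close> variance_positive[of "\<eta> u"] by (cases "variance (\<eta> u) = 0") simp_all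
  then show ?thesis
    using subgaussian_centered_normal_rv[OF centered_gaussian_field_lincomb[OF F assms(2,2),
          of "sqrt (N / variance (\<eta> u))" 0]]
      centered_gaussian_field_second_moment[OF F assms(2,2), of "sqrt (N / variance (\<eta> u))" 0]
    by simp
qed

lemma (in prob_space) centered_gaussian_field_exists_projection:
  assumes F: "centered_gaussian_field M V \<eta>" and "v \<in> V"
    and var: "variance (\<eta> v) \<le> N" and "0 \<le> e" "e < 1" and "W \<subseteq> V"
    and dom: "v \<notin> W \<Longrightarrow>
      \<exists>w\<in>W. e * sqrt (variance (\<eta> v) * variance (\<eta> w)) < expectation (\<lambda>x. \<eta> v x * \<eta> w x)"
  shows "\<exists>w a. w \<in> W \<and> 0 \<le> a \<and> a \<le> sqrt (N / variance (\<eta> w))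
    \<and> expectation (\<lambda>x. (\<eta> v x - a * \<eta> w x)\<^sup>2) \<le> N * (1 - e\<^sup>2)"
proof (cases "\<exists>w\<in>W. e * sqrt (variance (\<eta> v) * variance (\<eta> w)) < expectation (\<lambda>x. \<eta> v x * \<eta> w x)")
  case True
  then obtain w where "w \<in> W"
    and corr: "e * sqrt (variance (\<eta> v) * variance (\<eta> w)) < expectation (\<lambda>x. \<eta> v x * \<eta> w x)"
    by blast
  note regression = centered_gaussian_field_regression[OF F \<open>v \<in> V\<close> _ \<open>0 \<le> e\<close> corr]
  let ?a = "expectation (\<lambda>x. \<eta> v x * \<eta> w x) / variance (\<eta> w)"
  have "variance (\<eta> v) / variance (\<eta> w) \<le> N / variance (\<eta> w)"
    using var variance_positive by (rule divide_right_mono)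
  then have "?a \<le> sqrt (N / variance (\<eta> w))"
    using regression(2) \<open>w \<in> W\<close> \<open>W \<subseteq> V\<close> by (meson order_trans real_sqrt_le_mono subsetD)
  moreover have "(1 - e\<^sup>2) * variance (\<eta> v) \<le> N * (1 - e\<^sup>2)"
    using mult_left_mono[OF var, of "1 - e\<^sup>2"] \<open>0 \<le> e\<close> \<open>e < 1\<close> by (simp add: mult.commute abs_square_le_1)
  ultimately show ?thesis
    using regression(1,3) \<open>w \<in> W\<close> \<open>W \<subseteq> V\<close> by (intro exI[of _ w] exI[of _ ?a]) fastforce
next
  case False
  \<comment> \<open>Then \<open>v \<in> W\<close> is not even correlated with itself, so its variance vanishes.\<close>
  then have "v \<in> W"
    using dom by blast
  with False have "\<not> e * sqrt (variance (\<eta> v) * variance (\<eta> v)) < expectation (\<lambda>x. \<eta> v x * \<eta> v x)"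
    by blast
  moreover have "expectation (\<lambda>x. \<eta> v x * \<eta> v x) = variance (\<eta> v)"
    using centered_gaussian_field_variance[OF F \<open>v \<in> V\<close>] by (simp add: power2_eq_square)
  ultimately have "(1 - e) * variance (\<eta> v) \<le> 0"
    using variance_positive[of "\<eta> v"] by (simp add: algebra_simps)
  then have "variance (\<eta> v) = 0"
    using \<open>e < 1\<close> variance_positive[of "\<eta> v"] by (simp add: mult_le_0_iff)
  moreover have "0 \<le> N"
    using var variance_positive[of "\<eta> v"] by linarith
  moreover have "0 \<le> 1 - e\<^sup>2"
    using \<open>0 \<le> e\<close> \<open>e < 1\<close> by (simp add: abs_square_le_1)
  ultimately show ?thesis
    using \<open>v \<in> W\<close> centered_gaussian_field_variance[OF F \<open>v \<in> V\<close>]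
    by (intro exI[of _ v] exI[of _ 0]) simp
qed

lemma (in prob_space) expectation_Max_le_projection:
  assumes F: "centered_gaussian_field M V \<eta>" and "V \<noteq> {}" "W \<subseteq> V" "0 \<le> N" "0 \<le> \<sigma>2"
    and w: "\<And>v. v \<in> V \<Longrightarrow> w v \<in> W"
    and a: "\<And>v. v \<in> V \<Longrightarrow> 0 \<le> a v" "\<And>v. v \<in> V \<Longrightarrow> a v \<le> sqrt (N / variance (\<eta> (w v)))"
    and residual: "\<And>v. v \<in> V \<Longrightarrow> expectation (\<lambda>x. (\<eta> v x - a v * \<eta> (w v) x)\<^sup>2) \<le> \<sigma>2"
  shows "expectation (\<lambda>x. MAX v\<in>V. \<eta> v x) \<le> sqrt (2 * N * ln (card W + 1)) + sqrt (2 * \<sigma>2 * ln (card V))"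
proof -
  have "finite V"
    using F unfolding centered_gaussian_field_def by simp
  then have "finite W"
    using \<open>W \<subseteq> V\<close> finite_subset by blast
  define \<xi> where "\<xi> v x = \<eta> v x - a v * \<eta> (w v) x" for v x
  \<comment> \<open>The index \<open>None\<close> contributes the constant \<open>0\<close>, which dominates \<open>a v * \<eta> (w v) x\<close>
    where \<open>\<eta> (w v) x < 0\<close>.\<close>
  define I where "I = insert None (Some ` W)"
  define X where "X i = (case i of None \<Rightarrow> (\<lambda>_. 0) | Some u \<Rightarrow> (\<lambda>x. sqrt (N / variance (\<eta> u)) * \<eta> u x))" for i
  have I: "finite I" "I \<noteq> {}" "card I = card W + 1"
    unfolding I_def using \<open>finite W\<close> by (simp_all add: card_image)
  have sg_\<xi>: "subgaussian M (\<xi> v) \<sigma>2" if "v \<in> V" for v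
    using subgaussian_centered_normal_rv[OF centered_gaussian_field_lincomb[OF F that, of "w v" 1 "- a v"]]
      residual[OF that] w[OF that] \<open>W \<subseteq> V\<close> unfolding \<xi>_def by auto
  have sg_X: "subgaussian M (X i) N" if "i \<in> I" for i
    using that subgaussian_zero[OF \<open>0 \<le> N\<close>] subgaussian_rescaled_centered_gaussian_field[OF F _ \<open>0 \<le> N\<close>]
      \<open>W \<subseteq> V\<close> unfolding I_def X_def by auto
  have "\<eta> v x \<le> (MAX i\<in>I. X i x) + \<xi> v x" if "v \<in> V" for v x
  proof -
    have "a v * \<eta> (w v) x \<le> max (X None x) (X (Some (w v)) x)"
      using mult_le_max_zero[OF a[OF that]] unfolding X_def by simp
    also have "\<dots> \<le> (MAX i\<in>I. X i x)"
      using I(1) w[OF that] unfolding I_def by (intro max.boundedI Max_ge) simp_all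
    finally show ?thesis
      unfolding \<xi>_def by simp
  qed
  then have "expectation (\<lambda>x. MAX v\<in>V. \<eta> v x)
      \<le> expectation (\<lambda>x. MAX i\<in>I. X i x) + expectation (\<lambda>x. MAX v\<in>V. \<xi> v x)"
    using \<open>finite V\<close> \<open>V \<noteq> {}\<close> I(1,2) subgaussian_integrable[OF sg_X] subgaussian_integrable[OF sg_\<xi>]
      centered_normal_rv_moments(1)[OF centered_gaussian_field_lincomb[OF F, of _ _ 1 0]]
    by (intro expectation_Max_le_Max_add_Max) auto
  also have "\<dots> \<le> sqrt (2 * N * ln (card W + 1)) + sqrt (2 * \<sigma>2 * ln (card V))"
    using expectation_Max_le_subgaussian[OF I(1,2) \<open>0 \<le> N\<close> sg_X]
      expectation_Max_le_subgaussian[OF \<open>finite V\<close> \<open>V \<noteq> {}\<close> \<open>0 \<le> \<sigma>2\<close> sg_\<xi>] I(3)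
    by (intro add_mono) simp_all
  finally show ?thesis .
qed

section \<open>Decorrelated subsets\<close>

definition decorrelated :: "'b measure \<Rightarrow> ('a \<Rightarrow> 'b \<Rightarrow> real) \<Rightarrow> real \<Rightarrow> 'a set \<Rightarrow> bool" where
  "decorrelated M \<eta> \<epsilon> W \<longleftrightarrow> (\<forall>u\<in>W. \<forall>v\<in>W. u \<noteq> v \<longrightarrow>
     prob_space.expectation M (\<lambda>x. \<eta> u x * \<eta> v x)
       \<le> \<epsilon> * sqrt (prob_space.variance M (\<eta> u) * prob_space.variance M (\<eta> v)))"

lemma exists_independent_dominating_subset:
  assumes "finite V" and sym: "\<And>u v. R u v \<Longrightarrow> R v u"
  shows "\<exists>W\<subseteq>V. (\<forall>u\<in>W. \<forall>v\<in>W. u \<noteq> v \<longrightarrow> \<not> R u v) \<and> (\<forall>v\<in>V - W. \<exists>w\<in>W. R v w)"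
proof -
  define independent where "independent = {W. W \<subseteq> V \<and> (\<forall>u\<in>W. \<forall>v\<in>W. u \<noteq> v \<longrightarrow> \<not> R u v)}"
  have "independent \<subseteq> Pow V"
    by (auto simp: independent_def)
  then have "finite independent"
    using \<open>finite V\<close> finite_subset by blast
  moreover have "independent \<noteq> {}"
    by (auto simp: independent_def)
  ultimately have "\<exists>W\<in>independent. \<forall>W'\<in>independent. W \<subseteq> W' \<longrightarrow> W = W'"
    by (rule finite_has_maximal)
  then obtain W where W: "W \<in> independent"
    and maximal: "\<forall>W'\<in>independent. W \<subseteq> W' \<longrightarrow> W = W'" ..
  have "\<exists>w\<in>W. R v w" if v: "v \<in> V - W" for v
  proof -
    have "insert v W \<notin> independent"
      using maximal v by blast
    then obtain x y where xy: "x \<in> insert v W" "y \<in> insert v W" "x \<noteq> y" "R x y"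
      using v W unfolding independent_def by blast
    show ?thesis
    proof (cases "x = v")
      case True
      then show ?thesis
        using xy by auto
    next
      case False
      then have "x \<in> W"
        using xy(1) by simp
      then have "y = v"
        using W xy unfolding independent_def by auto
      then show ?thesis
        using sym[OF xy(4)] \<open>x \<in> W\<close> by auto
    qed
  qed
  then show ?thesis
    using W unfolding independent_def by auto
qed

lemma (in prob_space) expectation_Max_le_dominating_subset:
  assumes F: "centered_gaussian_field M V \<eta>" and "V \<noteq> {}"
    and var: "\<And>v. v \<in> V \<Longrightarrow> variance (\<eta> v) \<le> N"
    and "0 \<le> e" "e < 1" and "W \<subseteq> V"
    and dom: "\<And>v. v \<in> V - W \<Longrightarrow>
      \<exists>w\<in>W. e * sqrt (variance (\<eta> v) * variance (\<eta> w)) < expectation (\<lambda>x. \<eta> v x * \<eta> w x)"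
  shows "expectation (\<lambda>x. MAX v\<in>V. \<eta> v x)
    \<le> sqrt (2 * N * ln (card W + 1)) + sqrt (2 * (N * (1 - e\<^sup>2)) * ln (card V))"
proof -
  have "\<forall>v\<in>V. \<exists>w a. w \<in> W \<and> 0 \<le> a \<and> a \<le> sqrt (N / variance (\<eta> w))
    \<and> expectation (\<lambda>x. (\<eta> v x - a * \<eta> w x)\<^sup>2) \<le> N * (1 - e\<^sup>2)"
    using centered_gaussian_field_exists_projection[OF F _ var \<open>0 \<le> e\<close> \<open>e < 1\<close> \<open>W \<subseteq> V\<close>] dom by blast
  then obtain w where "\<forall>v\<in>V. \<exists>a. w v \<in> W \<and> 0 \<le> a \<and> a \<le> sqrt (N / variance (\<eta> (w v)))
    \<and> expectation (\<lambda>x. (\<eta> v x - a * \<eta> (w v) x)\<^sup>2) \<le> N * (1 - e\<^sup>2)"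
    by (rule bchoice[THEN exE])
  then obtain a where "\<forall>v\<in>V. w v \<in> W \<and> 0 \<le> a v \<and> a v \<le> sqrt (N / variance (\<eta> (w v)))
    \<and> expectation (\<lambda>x. (\<eta> v x - a v * \<eta> (w v) x)\<^sup>2) \<le> N * (1 - e\<^sup>2)"
    by (rule bchoice[THEN exE])
  moreover obtain v\<^sub>0 where "v\<^sub>0 \<in> V"
    using \<open>V \<noteq> {}\<close> by blast
  then have "0 \<le> N"
    using var[of v\<^sub>0] variance_positive[of "\<eta> v\<^sub>0"] by linarith
  ultimately show ?thesis
    using \<open>0 \<le> e\<close> \<open>e < 1\<close>
    by (intro expectation_Max_le_projection[OF F \<open>V \<noteq> {}\<close> \<open>W \<subseteq> V\<close>, of N _ w a])
      (simp_all add: abs_square_le_1)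
qed

lemma (in prob_space) decorrelated_mono:
  assumes "decorrelated M \<eta> e W" "e \<le> \<epsilon>"
  shows "decorrelated M \<eta> \<epsilon> W"
  unfolding decorrelated_def
proof (intro ballI impI)
  fix u v
  assume "u \<in> W" "v \<in> W" "u \<noteq> v"
  then have "expectation (\<lambda>x. \<eta> u x * \<eta> v x) \<le> e * sqrt (variance (\<eta> u) * variance (\<eta> v))"
    using assms(1) unfolding decorrelated_def by blast
  also have "\<dots> \<le> \<epsilon> * sqrt (variance (\<eta> u) * variance (\<eta> v))"
    using assms(2) variance_positive by (intro mult_right_mono) simp_all
  finally show "expectation (\<lambda>x. \<eta> u x * \<eta> v x) \<le> \<epsilon> * sqrt (variance (\<eta> u) * variance (\<eta> v))" .
qed

lemma (in prob_space) exists_decorrelated_subset: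
  assumes F: "centered_gaussian_field M V \<eta>" and "V \<noteq> {}"
    and var: "\<And>v. v \<in> V \<Longrightarrow> variance (\<eta> v) \<le> N" and "0 \<le> e" "e < 1"
  shows "\<exists>W\<subseteq>V. decorrelated M \<eta> e W \<and> expectation (\<lambda>x. MAX v\<in>V. \<eta> v x)
    \<le> sqrt (2 * N * ln (real (card W) + 1)) + sqrt (1 - e\<^sup>2) * sqrt (2 * N * ln (card V))"
proof -
  define correlated where "correlated u v \<longleftrightarrow>
    e * sqrt (variance (\<eta> u) * variance (\<eta> v)) < expectation (\<lambda>x. \<eta> u x * \<eta> v x)" for u v
  have "finite V"
    using F unfolding centered_gaussian_field_def by simp
  then obtain W where "W \<subseteq> V" and independent: "\<forall>u\<in>W. \<forall>v\<in>W. u \<noteq> v \<longrightarrow> \<not> correlated u v"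
    and dominating: "\<forall>v\<in>V - W. \<exists>w\<in>W. correlated v w"
    using exists_independent_dominating_subset[of V correlated] by (auto simp: correlated_def ac_simps)
  have "expectation (\<lambda>x. MAX v\<in>V. \<eta> v x)
      \<le> sqrt (2 * N * ln (card W + 1)) + sqrt (2 * (N * (1 - e\<^sup>2)) * ln (card V))"
    using dominating unfolding correlated_def
    by (intro expectation_Max_le_dominating_subset[OF F \<open>V \<noteq> {}\<close> var \<open>0 \<le> e\<close> \<open>e < 1\<close> \<open>W \<subseteq> V\<close>]) auto
  also have "2 * (N * (1 - e\<^sup>2)) * ln (card V) = (1 - e\<^sup>2) * (2 * N * ln (card V))"
    by (simp add: ac_simps)
  finally have "expectation (\<lambda>x. MAX v\<in>V. \<eta> v x)
      \<le> sqrt (2 * N * ln (real (card W) + 1)) + sqrt (1 - e\<^sup>2) * sqrt (2 * N * ln (card V))"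
    by (simp only: real_sqrt_mult of_nat_add of_nat_1)
  moreover have "decorrelated M \<eta> e W"
    using independent unfolding decorrelated_def correlated_def by (auto simp: not_less)
  ultimately show ?thesis
    using \<open>W \<subseteq> V\<close> by blast
qed

section \<open>Asymptotics\<close>

lemma sqrt_ln_succ_less:
  fixes x k d :: real
  assumes "0 < x" "0 < d" "0 \<le> k" and "ln 2 < d\<^sup>2 * x" "k < exp (d\<^sup>2 * x)"
  shows "sqrt (2 * x * ln (k + 1)) < 2 * x * d"
proof -
  have "1 \<le> exp (d\<^sup>2 * x)"
    using \<open>0 < x\<close> by simp
  then have "k + 1 < 2 * exp (d\<^sup>2 * x)"
    using assms(5) by linarith
  then have "ln (k + 1) < ln (2 * exp (d\<^sup>2 * x))"
    using \<open>0 \<le> k\<close> by (subst ln_less_cancel_iff) auto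
  also have "\<dots> = ln 2 + d\<^sup>2 * x"
    by (simp add: ln_mult)
  finally have "ln (k + 1) < 2 * (d\<^sup>2 * x)"
    using assms(4) by linarith
  then have "2 * x * ln (k + 1) < 2 * x * (2 * (d\<^sup>2 * x))"
    using \<open>0 < x\<close> by (intro mult_strict_left_mono) simp_all
  also have "\<dots> = (2 * x * d)\<^sup>2"
    by (simp add: power_mult_distrib power2_eq_square)
  finally have "sqrt (2 * x * ln (k + 1)) < sqrt ((2 * x * d)\<^sup>2)"
    by (rule real_sqrt_less_mono)
  then show ?thesis
    using \<open>0 < d\<close> \<open>0 < x\<close> by simp
qed

lemma sqrt_ln_sum_less:
  fixes x k m r s \<delta> :: real
  assumes "0 < x" "0 < r" "0 < \<delta>" "0 \<le> s" "s + 4 * \<delta> \<le> 1" "0 \<le> k"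
    and "ln 2 < (r * \<delta>)\<^sup>2 * x" "k < exp ((r * \<delta>)\<^sup>2 * x)"
    and m: "ln m < x * (r\<^sup>2 / 2 * (1 + \<delta>))"
  shows "sqrt (2 * x * ln (k + 1)) + s * sqrt (2 * x * ln m) < x * r * (1 - \<delta>)"
proof -
  have net: "sqrt (2 * x * ln (k + 1)) < 2 * x * (r * \<delta>)"
    using assms by (intro sqrt_ln_succ_less) simp_all
  have "2 * x * ln m < 2 * x * (x * (r\<^sup>2 / 2 * (1 + \<delta>)))"
    using m \<open>0 < x\<close> by simp
  also have "\<dots> = (x * r)\<^sup>2 * (1 + \<delta>)"
    by (simp add: power_mult_distrib power2_eq_square)
  also have "\<dots> \<le> (x * r)\<^sup>2 * (1 + \<delta>)\<^sup>2"
    using \<open>0 < \<delta>\<close> by (intro mult_left_mono) (simp_all add: power2_eq_square)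
  finally have "sqrt (2 * x * ln m) \<le> sqrt ((x * r * (1 + \<delta>))\<^sup>2)"
    by (intro real_sqrt_le_mono less_imp_le) (simp add: power_mult_distrib)
  then have "sqrt (2 * x * ln m) \<le> x * r * (1 + \<delta>)"
    using \<open>0 < r\<close> \<open>0 < \<delta>\<close> \<open>0 < x\<close> by simp
  then have "s * sqrt (2 * x * ln m) \<le> s * (x * r * (1 + \<delta>))"
    using \<open>0 \<le> s\<close> by (rule mult_left_mono)
  with net have "sqrt (2 * x * ln (k + 1)) + s * sqrt (2 * x * ln m) < x * r * (2 * \<delta> + s * (1 + \<delta>))"
    by (simp add: algebra_simps)
  also have "\<dots> \<le> x * r * (1 - \<delta>)"
  proof (rule mult_left_mono)
    have "s * (1 + \<delta>) \<le> (1 - 4 * \<delta>) * (1 + \<delta>)"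
      using assms by (intro mult_right_mono) simp_all
    moreover have "(1 - 4 * \<delta>) * (1 + \<delta>) = 1 - 3 * \<delta> - 4 * \<delta>\<^sup>2"
      by (simp add: algebra_simps power2_eq_square)
    ultimately show "2 * \<delta> + s * (1 + \<delta>) \<le> 1 - \<delta>"
      using zero_le_power2[of \<delta>] by linarith
  qed (use \<open>0 < r\<close> \<open>0 < x\<close> in simp)
  finally show ?thesis .
qed

lemma eventually_exp_le_of_sqrt_bound:
  fixes E k m :: "nat \<Rightarrow> real" and L s :: real
  assumes "0 < L" "0 \<le> s" "s < 1" and k_nonneg: "\<And>n. 0 \<le> k n"
    and E_lim: "(\<lambda>n. E n / (real n * sqrt (2 * L))) \<longlonglongrightarrow> 1"
    and m_lim: "(\<lambda>n. ln (m n) / real n) \<longlonglongrightarrow> L"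
    and bound: "\<forall>\<^sub>F n in sequentially.
      E n \<le> sqrt (2 * real n * ln (k n + 1)) + s * sqrt (2 * real n * ln (m n))"
  shows "\<exists>c>0. \<forall>\<^sub>F n in sequentially. exp (c * real n) \<le> k n"
proof -
  define r where "r = sqrt (2 * L)"
  define \<delta> where "\<delta> = (1 - s) / 4"
  have "0 < r" "0 < \<delta>" "s + 4 * \<delta> \<le> 1"
    using assms by (simp_all add: r_def \<delta>_def field_simps)
  have "L = r\<^sup>2 / 2"
    using \<open>0 < L\<close> by (simp add: r_def)
  have "\<forall>\<^sub>F n in sequentially. 1 - \<delta> < E n / (real n * r)"
    using order_tendstoD(1)[OF E_lim, of "1 - \<delta>"] \<open>0 < \<delta>\<close> unfolding r_def by simp
  moreover have "\<forall>\<^sub>F n in sequentially. ln (m n) / real n < L * (1 + \<delta>)"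
    using order_tendstoD(2)[OF m_lim, of "L * (1 + \<delta>)"] \<open>0 < L\<close> \<open>0 < \<delta>\<close> by simp
  moreover have "\<forall>\<^sub>F n in sequentially. ln 2 / (r * \<delta>)\<^sup>2 < real n"
    using eventually_gt_at_top[of "nat \<lceil>ln 2 / (r * \<delta>)\<^sup>2\<rceil>"] by eventually_elim linarith
  moreover note bound eventually_gt_at_top[of 0]
  ultimately have "\<forall>\<^sub>F n in sequentially. exp ((r * \<delta>)\<^sup>2 * real n) \<le> k n"
  proof eventually_elim
    case (elim n)
    show ?case
    proof (rule ccontr)
      assume "\<not> exp ((r * \<delta>)\<^sup>2 * real n) \<le> k n"
      moreover have "0 < real n" "0 < (r * \<delta>)\<^sup>2"
        using elim(5) \<open>0 < r\<close> \<open>0 < \<delta>\<close> by simp_all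
      ultimately have "E n < n * r * (1 - \<delta>)"
        using elim(2-4) \<open>L = r\<^sup>2 / 2\<close> sqrt_ln_sum_less[of n r \<delta> s "k n" "m n"] assms(2) k_nonneg[of n]
          \<open>0 < r\<close> \<open>0 < \<delta>\<close> \<open>s + 4 * \<delta> \<le> 1\<close>
        by (simp add: pos_divide_less_eq divide_less_eq mult.commute)
      then show False
        using elim(1) \<open>0 < r\<close> \<open>0 < real n\<close> by (simp add: less_divide_eq mult.commute)
    qed
  qed
  then show ?thesis
    using \<open>0 < r\<close> \<open>0 < \<delta>\<close> by (intro exI[of _ "(r * \<delta>)\<^sup>2"]) simp
qed

theorem lemma2p1:
  fixes M :: "nat \<Rightarrow> 'b measure"
    and V :: "nat \<Rightarrow> 'a set"
    and \<eta> :: "nat \<Rightarrow> 'a \<Rightarrow> 'b \<Rightarrow> real"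
    and lam :: real
  assumes field: "\<And>n. centered_gaussian_field (M n) (V n) (\<eta> n)"
    and fin: "\<And>n. finite (V n)"
    and ne: "\<And>n. V n \<noteq> {}"
    and lam: "lam > 1"
    and var: "\<And>n v. n \<ge> 1 \<Longrightarrow> v \<in> V n \<Longrightarrow> prob_space.variance (M n) (\<eta> n v) \<le> real n"
    and card_lim: "(\<lambda>n. ln (real (card (V n))) / real n) \<longlonglongrightarrow> ln lam"
    and sup_lim: "(\<lambda>n. prob_space.expectation (M n) (\<lambda>\<omega>. Max ((\<lambda>v. \<eta> n v \<omega>) ` V n))
                       / (real n * sqrt (2 * ln lam))) \<longlonglongrightarrow> 1"
  shows "\<forall>\<epsilon>>0. \<exists>c>0. \<exists>W :: nat \<Rightarrow> 'a set. (\<forall>n. W n \<subseteq> V n) \<and>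
           (\<forall>\<^sub>F n in sequentially.
              exp (c * real n) \<le> real (card (W n)) \<and>
              (\<forall>u\<in>W n. \<forall>v\<in>W n. u \<noteq> v \<longrightarrow>
                 prob_space.expectation (M n) (\<lambda>\<omega>. \<eta> n u \<omega> * \<eta> n v \<omega>)
                   \<le> \<epsilon> * sqrt (prob_space.variance (M n) (\<eta> n u) * prob_space.variance (M n) (\<eta> n v))))"
  unfolding decorrelated_def[symmetric]
proof (intro allI impI)
  fix \<epsilon> :: real
  assume "\<epsilon> > 0"
  \<comment> \<open>The regression step needs \<open>e < 1\<close>.\<close>
  define e where "e = min \<epsilon> (1 / 2)"
  have e: "0 < e" "e < 1" "e \<le> \<epsilon>"
    using \<open>\<epsilon> > 0\<close> by (auto simp: e_def)
  have prob: "prob_space (M n)" for n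
    using field[of n] unfolding centered_gaussian_field_def by simp
  define max_bound where "max_bound n W \<longleftrightarrow>
    prob_space.expectation (M n) (\<lambda>\<omega>. Max ((\<lambda>v. \<eta> n v \<omega>) ` V n))
      \<le> sqrt (2 * real n * ln (real (card W) + 1)) + sqrt (1 - e\<^sup>2) * sqrt (2 * real n * ln (card (V n)))"
    for n and W :: "'a set"
  have "\<exists>W\<subseteq>V n. decorrelated (M n) (\<eta> n) e W \<and> (1 \<le> n \<longrightarrow> max_bound n W)" for n
  proof (cases "1 \<le> n")
    case True
    then show ?thesis
      using prob_space.exists_decorrelated_subset[OF prob field ne var] e unfolding max_bound_def by simp
  qed (auto simp: decorrelated_def)
  then obtain W where W: "\<And>n. W n \<subseteq> V n" "\<And>n. decorrelated (M n) (\<eta> n) e (W n)"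
    and bound: "\<And>n. 1 \<le> n \<Longrightarrow> max_bound n (W n)"
    by (metis choice)
  obtain c where "c > 0" and card: "\<forall>\<^sub>F n in sequentially. exp (c * real n) \<le> real (card (W n))"
    using eventually_exp_le_of_sqrt_bound[OF _ _ _ _ sup_lim card_lim
        eventually_sequentiallyI[OF bound[unfolded max_bound_def]]] lam e
    by (auto simp: power_le_one abs_square_le_1 abs_square_less_1)
  have "\<forall>\<^sub>F n in sequentially. exp (c * real n) \<le> real (card (W n)) \<and> decorrelated (M n) (\<eta> n) \<epsilon> (W n)"
    using card prob_space.decorrelated_mono[OF prob W(2) \<open>e \<le> \<epsilon>\<close>] by simp
  then show "\<exists>c>0. \<exists>W. (\<forall>n. W n \<subseteq> V n) \<and> (\<forall>\<^sub>F n in sequentially.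
      exp (c * real n) \<le> real (card (W n)) \<and> decorrelated (M n) (\<eta> n) \<epsilon> (W n))"
    using \<open>c > 0\<close> W(1) by blast
qed

end
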